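(* Assume there is $\lambda>0$ with $\lim_{k\to\infty}f(k)k^{1+\lambda}=0$, and let $\mu=\mathbb{E}[R]$ and $g_n=\frac{1}{\mu}\sum_{i=1}^n f(i)$. Then for every $\alpha\in(0,1)$ and every $\delta>0$, $$\lim_{n\to\infty}\mathbb{P}\Big(\big||\mathcal{V}_\alpha|-n^{1-g_n\alpha}\big|\ge\delta\,n^{1-g_n\alpha}\Big)=0,$$ where $\mathcal{V}_\alpha=(\mathbb{Z}/n\mathbb{Z})\setminus X_{\alpha n\ln n/\mu}$.
   Context: Covering process: $R$ takes values in $\{1,2,\dots\}$, $f(r)=\mathbb{P}(R\ge r)$. On $\mathbb{Z}/n\mathbb{Z}$, let $(R_k)$ be i.i.d. copies of $R$, $(U_k)$ i.i.d. uniform on $\mathbb{Z}/n\mathbb{Z}$, independent; $\mathcal{O}_k=\{U_k,\dots,U_k+R_k-1\}$ (mod $n$), $C_0=\emptyset$, $C_k=C_{k-1}\cup\mathcal{O}_k$; with an independent rate-one Poisson process $N(t)$, $X_t=C_{N(t)}$. *)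

theory Defs
  imports "HOL-Probability.Probability"
begin

definition tailf :: "nat pmf \<Rightarrow> nat \<Rightarrow> real" where
  "tailf R r = measure_pmf.prob R {r..}"

definition meanR :: "nat pmf \<Rightarrow> real" where
  "meanR R = measure_pmf.expectation R real"

text \<open>The arc O = {u, u+1, ..., u+r-1} (mod n) in Z/nZ, represented by {0..<n}.\<close>
definition arc :: "nat \<Rightarrow> nat \<Rightarrow> nat \<Rightarrow> nat set" where
  "arc n u r = {(u + j) mod n | j. j < r}"

text \<open>Law of C_k: C_0 = {}, C_k = C_(k-1) \<union> O_k with O_k built from fresh
  independent U_k uniform on Z/nZ and R_k ~ R.\<close>
fun cover_law :: "nat pmf \<Rightarrow> nat \<Rightarrow> nat \<Rightarrow> nat set pmf" where
  "cover_law R n 0 = return_pmf {}"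
| "cover_law R n (Suc k) =
     bind_pmf (cover_law R n k) (\<lambda>C.
     bind_pmf (pmf_of_set {0..<n}) (\<lambda>u.
     map_pmf (\<lambda>r. C \<union> arc n u r) R))"

text \<open>Law of X_t = C_{N(t)} with N an independent rate-one Poisson process
  (N(t) ~ Poisson(t)).\<close>
definition X_law :: "nat pmf \<Rightarrow> nat \<Rightarrow> real \<Rightarrow> nat set pmf" where
  "X_law R n t = bind_pmf (poisson_pmf t) (\<lambda>k. cover_law R n k)"

end

theory Submission
  imports Defs "HOL-Real_Asymp.Real_Asymp"
begin

(* The number V of uncovered sites is controlled by the second moment method. One arc hits a
   given site with probability p = arc_hit_prob R n = (f 1 + ... + f n) / n, and a Poisson(t)
   number of independent arcs misses a set A with probability exp (-t q), where q is the
   probability that one arc hits A. Hence E V = n exp (-t p), which is n^(1 - g_n alpha) for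
   t = alpha n ln n / mu, and Var V = exp (-2 t p) * sum over x, y of (exp (t s x y) - 1), where
   s x y is the probability that one arc covers both x and y. Unless x and y lie on a common arc
   of length D, only arcs longer than D cover both, so s x y <= H_D / n with
   H_D = tailf_sum_beyond R D n = O(D^-lambda); for the at most n D^2 remaining pairs,
   s x y <= p. Chebyshev's inequality bounds the deviation probability by
   (D^2 n^alpha / n + exp (t H_D / n) - 1) / delta^2, and D = ceil(n^((1 - alpha)/4)) makes both
   terms vanish. *)

section \<open>Avoidance probabilities of the Poisson covering\<close>

lemma measure_bind_pmf:
  "measure_pmf.prob (bind_pmf M N) A = measure_pmf.expectation M (\<lambda>x. measure_pmf.prob (N x) A)"
  unfolding measure_pmf_bind
  by (rule measure_pmf.measure_bind[where N="count_space UNIV"])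
     (auto simp: space_subprob_algebra intro: prob_space_imp_subprob_space measure_pmf.prob_space_axioms)

lemma expectation_poisson_pmf_power:
  fixes a t :: real
  assumes "0 < t"
  shows "measure_pmf.expectation (poisson_pmf t) (\<lambda>k. a ^ k) = exp (- t * (1 - a))"
proof -
  have exp_sums: "(\<lambda>k. x ^ k / fact k) sums exp x" for x :: real
    using exp_converges[of x] by (simp add: divide_inverse mult.commute)
  have terms: "pmf (poisson_pmf t) k * a ^ k = exp (- t) * ((t * a) ^ k / fact k)" for k
    using assms by (simp add: power_mult_distrib)
  have sums: "(\<lambda>k. pmf (poisson_pmf t) k * a ^ k) sums (exp (- t) * exp (t * a))"
    unfolding terms by (intro sums_mult exp_sums)
  have "norm (pmf (poisson_pmf t) k * a ^ k) = exp (- t) * ((t * \<bar>a\<bar>) ^ k / fact k)" for k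
    using assms by (simp add: abs_mult power_abs power_mult_distrib)
  then have "summable (\<lambda>k. norm (pmf (poisson_pmf t) k * a ^ k))"
    using summable_mult[OF sums_summable[OF exp_sums], of "exp (- t)"] by simp
  then have "integrable (count_space UNIV) (\<lambda>k. pmf (poisson_pmf t) k * a ^ k)"
    by (simp add: integrable_count_space_nat_iff)
  then have "measure_pmf.expectation (poisson_pmf t) (\<lambda>k. a ^ k) = exp (- t) * exp (t * a)"
    using sums unfolding measure_pmf_eq_density
    by (simp add: integral_density integral_count_space_nat sums_iff)
  then show ?thesis
    by (simp add: mult_exp_exp algebra_simps)
qed

definition arc_law :: "nat pmf \<Rightarrow> nat \<Rightarrow> nat set pmf" where
  "arc_law R n = bind_pmf (pmf_of_set {0..<n}) (\<lambda>u. map_pmf (arc n u) R)"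

lemma cover_law_Suc_arc_law:
  "cover_law R n (Suc k) = bind_pmf (cover_law R n k) (\<lambda>C. map_pmf ((\<union>) C) (arc_law R n))"
  by (simp add: arc_law_def map_bind_pmf pmf.map_comp o_def)

lemma prob_cover_law_disjoint:
  "measure_pmf.prob (cover_law R n k) {C. A \<inter> C = {}} =
     measure_pmf.prob (arc_law R n) {Z. A \<inter> Z = {}} ^ k"
proof (induction k)
  case 0
  then show ?case by simp
next
  case (Suc k)
  let ?q = "measure_pmf.prob (arc_law R n) {Z. A \<inter> Z = {}}"
  have step: "measure_pmf.prob (map_pmf ((\<union>) C) (arc_law R n)) {C. A \<inter> C = {}} =
      ?q * indicator {C. A \<inter> C = {}} C" for C
  proof -
    have "(\<union>) C -` {C. A \<inter> C = {}} = (if A \<inter> C = {} then {Z. A \<inter> Z = {}} else {})"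
      by auto
    then show ?thesis by (simp add: measure_map_pmf)
  qed
  show ?case
    unfolding cover_law_Suc_arc_law measure_bind_pmf step by (simp add: Suc.IH)
qed

lemma prob_X_law_disjoint:
  assumes "0 < t"
  shows "measure_pmf.prob (X_law R n t) {C. A \<inter> C = {}} =
    exp (- t * measure_pmf.prob (arc_law R n) {Z. A \<inter> Z \<noteq> {}})"
proof -
  have "measure_pmf.prob (arc_law R n) {Z. A \<inter> Z \<noteq> {}} =
      1 - measure_pmf.prob (arc_law R n) {Z. A \<inter> Z = {}}"
    using measure_pmf.prob_compl[of "{Z. A \<inter> Z = {}}" "arc_law R n"]
    by (simp add: Compl_eq_Diff_UNIV[symmetric] Collect_neg_eq[symmetric])
  then show ?thesis
    unfolding X_law_def measure_bind_pmf prob_cover_law_disjoint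
    by (simp add: expectation_poisson_pmf_power[OF assms])
qed

section \<open>Arcs on the cycle\<close>

lemma mod_add_minus_cancel_left:
  "(u::nat) < n \<Longrightarrow> ((u + j) mod n + n - u) mod n = j mod n"
  by (metis (no_types, opaque_lifting) Nat.diff_add_assoc diff_add_inverse
      dual_order.order_iff_strict group_cancel.add1 mod_add_left_eq mod_add_self2)

lemma mod_add_minus_inverse:
  "(u::nat) < n \<Longrightarrow> x < n \<Longrightarrow> (u + (x + n - u) mod n) mod n = x"
  by (metis add_diff_inverse_nat canonically_ordered_monoid_add_class.lessE
      mod_add_right_eq mod_add_self2 mod_if not_add_less2 trans_less_add1)

text \<open>\<open>(x + n - u) mod n\<close> is the distance from \<open>u\<close> forward to \<open>x\<close> around the cycle.\<close>

lemma mem_arc_iff: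
  assumes "u < n" "x < n"
  shows "x \<in> arc n u r \<longleftrightarrow> (x + n - u) mod n < r"
proof
  assume "x \<in> arc n u r"
  then obtain j where "j < r" "x = (u + j) mod n"
    unfolding arc_def by auto
  then show "(x + n - u) mod n < r"
    using mod_add_minus_cancel_left[OF assms(1)] by (simp add: le_less_trans[OF mod_less_eq_dividend])
next
  assume "(x + n - u) mod n < r"
  then show "x \<in> arc n u r"
    using mod_add_minus_inverse[OF assms] unfolding arc_def by force
qed

lemma inj_on_mod_reflect:
  assumes "(x::nat) < n"
  shows "inj_on (\<lambda>u. (x + n - u) mod n) {0..<n}"
proof (rule inj_onI)
  fix u v
  assume u: "u \<in> {0..<n}" and v: "v \<in> {0..<n}" and eq: "(x + n - u) mod n = (x + n - v) mod n"
  let ?c = "(x + n - u) mod n"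
  have "(u + ?c) mod n = (v + ?c) mod n"
    using mod_add_minus_inverse[OF _ assms, of u] mod_add_minus_inverse[OF _ assms, of v] u v
    by (simp only: eq) simp
  then have "(int u + int ?c) mod int n = (int v + int ?c) mod int n"
    by (metis of_nat_add of_nat_mod)
  then have "((int u + int ?c) mod int n - int ?c) mod int n = ((int v + int ?c) mod int n - int ?c) mod int n"
    by simp
  then have "int u mod int n = int v mod int n"
    by (simp add: mod_diff_left_eq)
  then show "u = v"
    using u v by simp
qed

lemma card_arcs_containing:
  assumes "x < n"
  shows "card {u \<in> {0..<n}. x \<in> arc n u r} = min r n"
proof -
  let ?f = "\<lambda>u. (x + n - u) mod n"
  have inj: "inj_on ?f {0..<n}"
    by (rule inj_on_mod_reflect[OF assms])
  have onto: "?f ` {0..<n} = {0..<n}"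
    by (rule endo_inj_surj[OF _ _ inj]) auto
  have "?f ` {u \<in> {0..<n}. x \<in> arc n u r} = {v \<in> {0..<n}. v < r}"
  proof (intro equalityI subsetI)
    fix v
    assume "v \<in> ?f ` {u \<in> {0..<n}. x \<in> arc n u r}"
    then show "v \<in> {v \<in> {0..<n}. v < r}"
      using mem_arc_iff[OF _ assms] by auto
  next
    fix v
    assume v: "v \<in> {v \<in> {0..<n}. v < r}"
    then obtain u where "u \<in> {0..<n}" "v = ?f u"
      using onto by blast
    then show "v \<in> ?f ` {u \<in> {0..<n}. x \<in> arc n u r}"
      using v mem_arc_iff[OF _ assms] by auto
  qed
  moreover have "card (?f ` {u \<in> {0..<n}. x \<in> arc n u r}) = card {u \<in> {0..<n}. x \<in> arc n u r}"
    by (rule card_image[OF inj_on_subset[OF inj]]) auto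
  moreover have "{v \<in> {0..<n}. v < r} = {0..<min r n}"
    by auto
  ultimately show ?thesis
    by simp
qed

lemma card_arc_le: "card (arc n u r) \<le> r"
proof -
  have "arc n u r = (\<lambda>j. (u + j) mod n) ` {..<r}"
    unfolding arc_def by auto
  then show ?thesis
    by (metis card_image_le card_lessThan finite_lessThan)
qed

lemma arc_mono: "r \<le> D \<Longrightarrow> arc n u r \<subseteq> arc n u D"
  unfolding arc_def by auto

definition arc_close :: "nat \<Rightarrow> nat \<Rightarrow> nat \<Rightarrow> nat \<Rightarrow> bool" where
  "arc_close n D x y \<longleftrightarrow> (\<exists>u<n. x \<in> arc n u D \<and> y \<in> arc n u D)"

lemma card_arc_close_le:
  assumes "x < n"
  shows "card {y \<in> {0..<n}. arc_close n D x y} \<le> D\<^sup>2"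
proof -
  let ?U = "{u \<in> {0..<n}. x \<in> arc n u D}"
  have "{y \<in> {0..<n}. arc_close n D x y} \<subseteq> (\<Union>u\<in>?U. arc n u D)"
    unfolding arc_close_def by auto
  moreover have "finite (arc n u D)" for u
    unfolding arc_def by auto
  ultimately have "card {y \<in> {0..<n}. arc_close n D x y} \<le> card (\<Union>u\<in>?U. arc n u D)"
    by (intro card_mono) auto
  also have "\<dots> \<le> (\<Sum>u\<in>?U. card (arc n u D))"
    by (rule card_UN_le) simp
  also have "\<dots> \<le> (\<Sum>u\<in>?U. D)"
    by (intro sum_mono card_arc_le)
  also have "\<dots> = min D n * D"
    using card_arcs_containing[OF assms, of D] by (simp only: sum_constant of_nat_id)
  finally show ?thesis
    by (simp add: power2_eq_square le_trans[OF _ mult_le_mono1])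
qed

section \<open>Hitting probabilities of a single arc\<close>

lemma integrable_measure_pmf_bounded:
  fixes f :: "'a \<Rightarrow> real"
  assumes "\<And>x. \<bar>f x\<bar> \<le> B"
  shows "integrable (measure_pmf M) f"
  by (rule measure_pmf.integrable_const_bound[where B=B]) (use assms in auto)

lemma prob_arc_law:
  assumes "0 < n"
  shows "measure_pmf.prob (arc_law R n) {Z. P Z} =
    measure_pmf.expectation R (\<lambda>r. real (card {u \<in> {0..<n}. P (arc n u r)}) / real n)"
proof -
  have "arc_law R n = bind_pmf R (\<lambda>r. map_pmf (\<lambda>u. arc n u r) (pmf_of_set {0..<n}))"
    unfolding arc_law_def map_pmf_def by (subst bind_commute_pmf) (simp add: o_def)
  moreover have "{0..<n} \<inter> {u. P (arc n u r)} = {u \<in> {0..<n}. P (arc n u r)}" for r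
    by auto
  ultimately show ?thesis
    using assms by (simp add: measure_bind_pmf measure_map_pmf measure_pmf_of_set vimage_def)
qed

definition tailf_sum_beyond :: "nat pmf \<Rightarrow> nat \<Rightarrow> nat \<Rightarrow> real" where
  "tailf_sum_beyond R D n = (\<Sum>i=1..n. tailf R (max i (Suc D)))"

lemma expectation_min_beyond:
  "measure_pmf.expectation R (\<lambda>r. if D < r then real (min r n) else 0) = tailf_sum_beyond R D n"
proof -
  have "(if D < r then real (min r n) else 0) = (\<Sum>i=1..n. indicator {max i (Suc D)..} r)" for r
  proof -
    have "(\<Sum>i=1..n. indicator {max i (Suc D)..} r :: real) = real (card {i \<in> {1..n}. max i (Suc D) \<le> r})"
      by (simp add: indicator_def sum.If_cases) (auto intro!: arg_cong[where f=card])
    also have "{i \<in> {1..n}. max i (Suc D) \<le> r} = (if D < r then {1..min r n} else {})"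
      by auto
    finally show ?thesis
      by simp
  qed
  then show ?thesis
    unfolding tailf_sum_beyond_def tailf_def
    by (simp add: Bochner_Integration.integral_sum integrable_measure_pmf_bounded[where B=1])
qed

lemma expectation_min:
  "measure_pmf.expectation R (\<lambda>r. real (min r n)) = (\<Sum>i=1..n. tailf R i)"
proof -
  have "(\<lambda>r. if 0 < r then real (min r n) else 0) = (\<lambda>r. real (min r n))"
    by auto
  then show ?thesis
    using expectation_min_beyond[of R 0 n] unfolding tailf_sum_beyond_def
    by (simp add: max_absorb1 Suc_le_eq)
qed

definition arc_hit_prob :: "nat pmf \<Rightarrow> nat \<Rightarrow> real" where
  "arc_hit_prob R n = (\<Sum>i=1..n. tailf R i) / real n"

lemma prob_arc_law_hits_point:
  assumes "x < n"
  shows "measure_pmf.prob (arc_law R n) {Z. x \<in> Z} = arc_hit_prob R n"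
proof -
  have "card {u \<in> {0..<n}. x \<in> arc n u r} = min r n" for r
    by (rule card_arcs_containing[OF assms])
  then show ?thesis
    using assms by (simp only: prob_arc_law) (simp add: expectation_min arc_hit_prob_def)
qed

lemma card_arcs_containing_far_pair:
  assumes "x < n" "\<not> arc_close n D x y"
  shows "card {u \<in> {0..<n}. x \<in> arc n u r \<and> y \<in> arc n u r} \<le> (if D < r then min r n else 0)"
proof (cases "D < r")
  case True
  have "card {u \<in> {0..<n}. x \<in> arc n u r \<and> y \<in> arc n u r} \<le> card {u \<in> {0..<n}. x \<in> arc n u r}"
    by (rule card_mono) auto
  then show ?thesis
    using True card_arcs_containing[OF assms(1)] by simp
next
  case False
  have "\<not> (x \<in> arc n u r \<and> y \<in> arc n u r)" if "u < n" for u
    using assms(2) arc_mono[of r D n u] False that unfolding arc_close_def by auto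
  then have "{u \<in> {0..<n}. x \<in> arc n u r \<and> y \<in> arc n u r} = {}"
    by auto
  then show ?thesis
    by (simp only: card.empty zero_le)
qed

lemma prob_arc_law_hits_far_pair:
  assumes "x < n" "\<not> arc_close n D x y"
  shows "measure_pmf.prob (arc_law R n) {Z. x \<in> Z \<and> y \<in> Z} \<le> tailf_sum_beyond R D n / real n"
proof -
  have n: "0 < n"
    using assms(1) by simp
  have card_le_n: "card {u \<in> {0..<n}. P u} \<le> n" for P
    using card_mono[of "{0..<n}" "{u \<in> {0..<n}. P u}"] by fastforce
  have "real (card {u \<in> {0..<n}. x \<in> arc n u r \<and> y \<in> arc n u r}) \<le> (if D < r then real (min r n) else 0)"
    for r
    using card_arcs_containing_far_pair[OF assms, of r] by (auto split: if_splits)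
  then have "measure_pmf.expectation R (\<lambda>r. real (card {u \<in> {0..<n}. x \<in> arc n u r \<and> y \<in> arc n u r}) / real n)
      \<le> measure_pmf.expectation R (\<lambda>r. (if D < r then real (min r n) else 0) / real n)"
    using card_le_n n
    by (intro Bochner_Integration.integral_mono integrable_measure_pmf_bounded[where B=1] divide_right_mono)
       auto
  then show ?thesis
    by (simp add: prob_arc_law[OF n] expectation_min_beyond)
qed

lemma prob_hits_pair:
  "measure_pmf.prob M {Z. x \<in> Z \<or> y \<in> Z} =
    measure_pmf.prob M {Z. x \<in> Z} + measure_pmf.prob M {Z. y \<in> Z} - measure_pmf.prob M {Z. x \<in> Z \<and> y \<in> Z}"
proof -
  have "measure_pmf.prob M ({Z. x \<in> Z} \<union> {Z. y \<in> Z}) =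
      measure_pmf.prob M {Z. x \<in> Z} + measure_pmf.prob M {Z. y \<in> Z} - measure_pmf.prob M ({Z. x \<in> Z} \<inter> {Z. y \<in> Z})"
    by (rule measure_Un3) (auto simp: fmeasurable_def measure_pmf.emeasure_eq_measure)
  then show ?thesis
    by (simp add: Un_def Int_def)
qed

section \<open>Mean and variance of the number of uncovered sites\<close>

lemma card_Diff_eq_sum_indicator:
  assumes "finite S"
  shows "real (card (S - X)) = (\<Sum>x\<in>S. indicator {X. x \<notin> X} X)"
proof -
  have "S \<inter> {x. x \<notin> X} = S - X"
    by auto
  then show ?thesis
    using assms by (simp add: indicator_def sum.If_cases)
qed

lemma integrable_card_Diff_power:
  assumes "finite S"
  shows "integrable (measure_pmf M) (\<lambda>X. real (card (S - X)) ^ k)"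
proof (rule integrable_measure_pmf_bounded)
  fix X
  have "card (S - X) \<le> card S"
    using assms by (intro card_mono) auto
  then show "\<bar>real (card (S - X)) ^ k\<bar> \<le> real (card S) ^ k"
    by (simp add: power_mono)
qed

lemma expectation_card_Diff:
  assumes "finite S"
  shows "measure_pmf.expectation M (\<lambda>X. real (card (S - X))) = (\<Sum>x\<in>S. measure_pmf.prob M {X. x \<notin> X})"
  using assms
  by (simp add: card_Diff_eq_sum_indicator Bochner_Integration.integral_sum integrable_measure_pmf_bounded[where B=1])

lemma expectation_card_Diff_sq:
  assumes "finite S"
  shows "measure_pmf.expectation M (\<lambda>X. (real (card (S - X)))\<^sup>2) =
    (\<Sum>x\<in>S. \<Sum>y\<in>S. measure_pmf.prob M {X. x \<notin> X \<and> y \<notin> X})"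
proof -
  have "(real (card (S - X)))\<^sup>2 = (\<Sum>x\<in>S. \<Sum>y\<in>S. indicator {X. x \<notin> X \<and> y \<notin> X} X)" for X
    unfolding power2_eq_square card_Diff_eq_sum_indicator[OF assms] sum_product
    by (intro sum.cong refl) (simp add: indicator_def)
  then show ?thesis
    using assms
    by (simp add: Bochner_Integration.integral_sum Bochner_Integration.integrable_sum
        integrable_measure_pmf_bounded[where B=1])
qed

context
  fixes R :: "nat pmf" and n :: nat and t :: real
  assumes t: "0 < t"
begin

lemma prob_X_law_avoids_point:
  assumes "x < n"
  shows "measure_pmf.prob (X_law R n t) {X. x \<notin> X} = exp (- t * arc_hit_prob R n)"
proof -
  have sets: "{X. x \<notin> X} = {X. {x} \<inter> X = {}}" "{Z. {x} \<inter> Z \<noteq> {}} = {Z. x \<in> Z}"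
    by auto
  show ?thesis
    unfolding sets prob_X_law_disjoint[OF t] prob_arc_law_hits_point[OF assms] ..
qed

lemma prob_X_law_avoids_pair:
  assumes "x < n" "y < n"
  shows "measure_pmf.prob (X_law R n t) {X. x \<notin> X \<and> y \<notin> X} =
    exp (- t * (2 * arc_hit_prob R n - measure_pmf.prob (arc_law R n) {Z. x \<in> Z \<and> y \<in> Z}))"
proof -
  have sets: "{X. x \<notin> X \<and> y \<notin> X} = {X. {x, y} \<inter> X = {}}"
    "{Z. {x, y} \<inter> Z \<noteq> {}} = {Z. x \<in> Z \<or> y \<in> Z}"
    by auto
  show ?thesis
    unfolding sets prob_X_law_disjoint[OF t] prob_hits_pair
      prob_arc_law_hits_point[OF assms(1)] prob_arc_law_hits_point[OF assms(2)]
    by simp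
qed

lemma expectation_card_uncovered:
  "measure_pmf.expectation (X_law R n t) (\<lambda>X. real (card ({0..<n} - X))) = real n * exp (- t * arc_hit_prob R n)"
  by (simp add: expectation_card_Diff prob_X_law_avoids_point)

lemma variance_card_uncovered:
  "measure_pmf.variance (X_law R n t) (\<lambda>X. real (card ({0..<n} - X))) =
    exp (- 2 * t * arc_hit_prob R n) *
      (\<Sum>x\<in>{0..<n}. \<Sum>y\<in>{0..<n}. exp (t * measure_pmf.prob (arc_law R n) {Z. x \<in> Z \<and> y \<in> Z}) - 1)"
proof -
  let ?M = "X_law R n t"
  let ?V = "\<lambda>X. real (card ({0..<n} - X))"
  let ?s = "\<lambda>x y. measure_pmf.prob (arc_law R n) {Z. x \<in> Z \<and> y \<in> Z}"
  have "measure_pmf.variance ?M ?V = measure_pmf.expectation ?M (\<lambda>X. (?V X)\<^sup>2) - (measure_pmf.expectation ?M ?V)\<^sup>2"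
    using integrable_card_Diff_power[of "{0..<n}" ?M 1] integrable_card_Diff_power[of "{0..<n}" ?M 2]
    by (intro measure_pmf.variance_eq) simp_all
  also have "measure_pmf.expectation ?M (\<lambda>X. (?V X)\<^sup>2) =
      (\<Sum>x\<in>{0..<n}. \<Sum>y\<in>{0..<n}. exp (- 2 * t * arc_hit_prob R n) * exp (t * ?s x y))"
    by (simp add: expectation_card_Diff_sq prob_X_law_avoids_pair exp_add[symmetric] algebra_simps)
  also have "(measure_pmf.expectation ?M ?V)\<^sup>2 = (\<Sum>x\<in>{0..<n}. \<Sum>y\<in>{0..<n}. exp (- 2 * t * arc_hit_prob R n))"
    by (simp add: expectation_card_uncovered power2_eq_square exp_add[symmetric])
  finally show ?thesis
    by (simp add: sum_subtractf sum_distrib_left right_diff_distrib)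
qed

lemma sum_exp_hits_pair_le:
  "(\<Sum>x\<in>{0..<n}. \<Sum>y\<in>{0..<n}. exp (t * measure_pmf.prob (arc_law R n) {Z. x \<in> Z \<and> y \<in> Z}) - 1)
    \<le> real n * (real D)\<^sup>2 * exp (t * arc_hit_prob R n)
      + (real n)\<^sup>2 * (exp (t * tailf_sum_beyond R D n / real n) - 1)"
proof -
  let ?s = "\<lambda>x y. measure_pmf.prob (arc_law R n) {Z. x \<in> Z \<and> y \<in> Z}"
  let ?c = "exp (t * tailf_sum_beyond R D n / real n) - 1"
  have c_nonneg: "0 \<le> ?c"
    unfolding tailf_sum_beyond_def tailf_def using t by (simp add: sum_nonneg)
  have term_le: "exp (t * ?s x y) - 1 \<le> (if arc_close n D x y then exp (t * arc_hit_prob R n) else 0) + ?c"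
    if "x < n" "y < n" for x y
  proof (cases "arc_close n D x y")
    case True
    have "?s x y \<le> arc_hit_prob R n"
      using measure_pmf.finite_measure_mono[of "{Z. x \<in> Z \<and> y \<in> Z}" "{Z. x \<in> Z}" "arc_law R n"]
      by (simp add: prob_arc_law_hits_point[OF that(1)] subset_eq)
    then have "exp (t * ?s x y) \<le> exp (t * arc_hit_prob R n)"
      using t by simp
    then have "exp (t * ?s x y) - 1 \<le> exp (t * arc_hit_prob R n) + ?c"
      using c_nonneg by linarith
    with True show ?thesis
      by simp
  next
    case False
    have "t * ?s x y \<le> t * tailf_sum_beyond R D n / real n"
      using mult_left_mono[OF prob_arc_law_hits_far_pair[OF that(1) False, of R], of t] t by simp
    then show ?thesis
      using False by simp
  qed
  have "(\<Sum>x\<in>{0..<n}. \<Sum>y\<in>{0..<n}. exp (t * ?s x y) - 1)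
      \<le> (\<Sum>x\<in>{0..<n}. \<Sum>y\<in>{0..<n}. (if arc_close n D x y then exp (t * arc_hit_prob R n) else 0) + ?c)"
    by (intro sum_mono term_le) auto
  also have "\<dots> = (\<Sum>x\<in>{0..<n}. exp (t * arc_hit_prob R n) * real (card {y \<in> {0..<n}. arc_close n D x y})) + (real n)\<^sup>2 * ?c"
    by (simp add: sum.distrib sum.If_cases power2_eq_square Int_def conj_commute mult.commute)
  also have "\<dots> \<le> (\<Sum>x\<in>{0..<n}. exp (t * arc_hit_prob R n) * (real D)\<^sup>2) + (real n)\<^sup>2 * ?c"
    using card_arc_close_le by (intro add_mono sum_mono mult_left_mono) (auto simp flip: of_nat_power)
  finally show ?thesis
    by (simp add: mult_ac)
qed

lemma prob_card_uncovered_deviation_le: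
  assumes n: "0 < n" and \<delta>: "0 < \<delta>"
  shows "measure_pmf.prob (X_law R n t)
      {X. \<delta> * (real n * exp (- t * arc_hit_prob R n))
        \<le> \<bar>real (card ({0..<n} - X)) - real n * exp (- t * arc_hit_prob R n)\<bar>}
    \<le> ((real D)\<^sup>2 * exp (t * arc_hit_prob R n) / real n
      + (exp (t * tailf_sum_beyond R D n / real n) - 1)) / \<delta>\<^sup>2"
proof -
  let ?M = "X_law R n t"
  let ?V = "\<lambda>X. real (card ({0..<n} - X))"
  let ?b = "real n * exp (- t * arc_hit_prob R n)"
  have "measure_pmf.prob ?M {X. \<delta> * ?b \<le> \<bar>?V X - ?b\<bar>} \<le> measure_pmf.variance ?M ?V / (\<delta> * ?b)\<^sup>2"
    using measure_pmf.Chebyshev_inequality[of ?V ?M "\<delta> * ?b"] integrable_card_Diff_power[of "{0..<n}" ?M 2] n \<delta>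
    by (simp add: expectation_card_uncovered)
  also have "\<dots> \<le> exp (- 2 * t * arc_hit_prob R n) * (real n * (real D)\<^sup>2 * exp (t * arc_hit_prob R n)
      + (real n)\<^sup>2 * (exp (t * tailf_sum_beyond R D n / real n) - 1)) / (\<delta> * ?b)\<^sup>2"
    unfolding variance_card_uncovered by (intro divide_right_mono mult_left_mono sum_exp_hits_pair_le) auto
  also have "\<dots> = ((real D)\<^sup>2 * exp (t * arc_hit_prob R n) / real n
      + (exp (t * tailf_sum_beyond R D n / real n) - 1)) / \<delta>\<^sup>2"
    using n \<delta> by (simp add: field_simps power2_eq_square exp_add[symmetric])
  finally show ?thesis .
qed

end

section \<open>Tail estimates\<close>

lemma powr_neg_diff_ge:
  fixes x lam :: real
  assumes "0 < x" "0 < lam"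
  shows "lam * (x + 1) powr (- lam - 1) \<le> x powr (- lam) - (x + 1) powr (- lam)"
proof -
  have "((\<lambda>y. y powr (- lam)) has_real_derivative (- lam) * y powr (- lam - 1)) (at y)" if "x \<le> y" for y
    using assms(1) that by (intro has_real_derivative_powr) simp
  then obtain z where z: "x < z" "z < x + 1"
    and mvt: "(x + 1) powr (- lam) - x powr (- lam) = (x + 1 - x) * ((- lam) * z powr (- lam - 1))"
    using MVT2[of x "x + 1" "\<lambda>y. y powr (- lam)" "\<lambda>y. (- lam) * y powr (- lam - 1)"] by auto
  have "(x + 1) powr (- lam - 1) \<le> z powr (- lam - 1)"
    using z assms by (intro powr_mono2') auto
  then have "lam * (x + 1) powr (- lam - 1) \<le> lam * z powr (- lam - 1)"
    using assms(2) by (simp add: mult_left_mono)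
  then show ?thesis
    using mvt by simp
qed

lemma sum_powr_neg_tail_le:
  fixes lam :: real and a n :: nat
  assumes "1 \<le> a" "0 < lam"
  shows "(\<Sum>i\<in>{a<..n}. real i powr (- lam - 1)) \<le> real a powr (- lam) / lam"
proof -
  have "lam * (\<Sum>i\<in>{a<..n}. real i powr (- lam - 1)) \<le> real a powr (- lam) - real n powr (- lam)"
    if "a \<le> n" for n
    using that
  proof (induction n rule: dec_induct)
    case base
    then show ?case by simp
  next
    case (step m)
    have "{a<..Suc m} = insert (Suc m) {a<..m}"
      using step by auto
    moreover have "lam * (real m + 1) powr (- lam - 1) \<le> real m powr (- lam) - (real m + 1) powr (- lam)"
      using powr_neg_diff_ge[of "real m" lam] step assms by simp
    ultimately show ?case
      using step.IH by (simp add: distrib_left add.commute)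
  qed
  then have "lam * (\<Sum>i\<in>{a<..n}. real i powr (- lam - 1)) \<le> real a powr (- lam)"
    by (cases "a \<le> n") (fastforce intro: order_trans, simp)
  then show ?thesis
    using assms(2) by (simp add: field_simps)
qed

lemma tailf_nonneg: "0 \<le> tailf R i"
  by (simp add: tailf_def)

lemma tailf_le_1: "tailf R i \<le> 1"
  by (simp add: tailf_def)

lemma tailf_one:
  assumes "0 \<notin> set_pmf R"
  shows "tailf R 1 = 1"
proof -
  have "{1::nat..} = UNIV - {0}"
    by auto
  then show ?thesis
    unfolding tailf_def using measure_pmf.prob_compl[of "{0}" R] assms
    by (simp add: measure_pmf_single set_pmf_iff)
qed

lemma tailf_le_powr_eventually:
  assumes "((\<lambda>k. tailf R k * real k powr (1 + lam)) \<longlongrightarrow> 0) sequentially"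
  obtains K where "1 \<le> K" "\<And>i. K < i \<Longrightarrow> tailf R i \<le> real i powr (- lam - 1)"
proof -
  obtain N where N: "\<And>k. N \<le> k \<Longrightarrow> tailf R k * real k powr (1 + lam) < 1"
    using order_tendstoD(2)[OF assms, of 1] unfolding eventually_sequentially by auto
  show ?thesis
  proof (rule that[of "max N 1"])
    fix i
    assume i: "max N 1 < i"
    have "- lam - 1 = - (1 + lam)"
      by simp
    then have "real i powr (- lam - 1) = 1 / real i powr (1 + lam)"
      by (simp only: powr_minus_divide)
    moreover have "0 < real i powr (1 + lam)"
      using i by simp
    ultimately show "tailf R i \<le> real i powr (- lam - 1)"
      using N[of i] i by (simp add: less_divide_eq less_imp_le)
  qed simp
qed

lemma sum_tailf_beyond_le:
  fixes lam :: real
  assumes "0 < lam" "1 \<le> D" and decay: "\<And>i. D < i \<Longrightarrow> tailf R i \<le> real i powr (- lam - 1)"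
  shows "tailf_sum_beyond R D n \<le> (1 + 1 / lam) * real D powr (- lam)"
proof -
  have "tailf R (max i (Suc D)) \<le> (if i \<le> D then tailf R (Suc D) else 0) + (if D < i then tailf R i else 0)" for i
    by (cases "i \<le> D") (simp_all add: max_absorb1 max_absorb2)
  then have "tailf_sum_beyond R D n \<le>
      (\<Sum>i=1..n. if i \<le> D then tailf R (Suc D) else 0) + (\<Sum>i=1..n. if D < i then tailf R i else 0)"
    unfolding tailf_sum_beyond_def sum.distrib[symmetric] by (intro sum_mono)
  also have "(\<Sum>i=1..n. if i \<le> D then tailf R (Suc D) else 0) \<le> real D * real (Suc D) powr (- lam - 1)"
  proof -
    have "card ({1..n} \<inter> {i. i \<le> D}) \<le> card {1..D}"
      by (intro card_mono) auto
    then show ?thesis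
      using decay[of "Suc D"] by (simp add: sum.If_cases mult_mono tailf_nonneg)
  qed
  also have "real D * real (Suc D) powr (- lam - 1) \<le> real D powr (- lam)"
  proof -
    have "real D * real (Suc D) powr (- lam - 1) \<le> real (Suc D) powr (- lam - 1) * real (Suc D) powr 1"
      by (simp add: mult.commute)
    also have "\<dots> = real (Suc D) powr (- lam)"
      by (simp only: powr_add[symmetric]) simp
    also have "\<dots> \<le> real D powr (- lam)"
      using assms(1,2) by (intro powr_mono2') auto
    finally show ?thesis .
  qed
  also have "(\<Sum>i=1..n. if D < i then tailf R i else 0) = (\<Sum>i\<in>{D<..n}. tailf R i)"
    using assms(2) by (simp add: sum.If_cases) (intro sum.cong; auto)
  also have "\<dots> \<le> (\<Sum>i\<in>{D<..n}. real i powr (- lam - 1))"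
    by (intro sum_mono decay) simp
  also have "\<dots> \<le> real D powr (- lam) / lam"
    by (rule sum_powr_neg_tail_le[OF assms(2,1)])
  finally show ?thesis
    by (simp add: field_simps)
qed

lemma sum_tailf_le: "(\<Sum>i=1..m. tailf R i) \<le> real K + tailf_sum_beyond R K m"
proof -
  have "tailf R i \<le> (if i \<le> K then 1 else 0) + tailf R (max i (Suc K))" for i
    by (cases "i \<le> K") (simp_all add: max_absorb1 tailf_le_1 tailf_nonneg add_increasing2)
  then have "(\<Sum>i=1..m. tailf R i) \<le> (\<Sum>i=1..m. if i \<le> K then 1 else 0) + tailf_sum_beyond R K m"
    unfolding tailf_sum_beyond_def sum.distrib[symmetric] by (intro sum_mono)
  also have "(\<Sum>i=1..m. if i \<le> K then 1 else 0 :: real) \<le> real K"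
  proof -
    have "card ({1..m} \<inter> {i. i \<le> K}) \<le> card {1..K}"
      by (intro card_mono) auto
    then show ?thesis
      by (simp add: sum.If_cases)
  qed
  finally show ?thesis
    by simp
qed

lemma integrable_of_sum_tailf_bounded:
  assumes "\<And>m. (\<Sum>i=1..m. tailf R i) \<le> B"
  shows "integrable (measure_pmf R) real"
proof (rule integrableI_bounded)
  let ?f = "\<lambda>m r. ennreal (real (min r m))"
  have "(SUP m. ?f m r) = ennreal (real r)" for r
  proof (rule antisym)
    show "(SUP m. ?f m r) \<le> ennreal (real r)"
      by (rule SUP_least) (simp add: ennreal_leI)
    show "ennreal (real r) \<le> (SUP m. ?f m r)"
      by (rule SUP_upper2[of r]) simp_all
  qed
  then have "(\<integral>\<^sup>+ r. ennreal (norm (real r)) \<partial>measure_pmf R) = (\<integral>\<^sup>+ r. (SUP m. ?f m r) \<partial>measure_pmf R)"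
    by simp
  also have "\<dots> = (SUP m. \<integral>\<^sup>+ r. ?f m r \<partial>measure_pmf R)"
    by (rule nn_integral_monotone_convergence_SUP) (auto simp: incseq_def le_fun_def intro!: ennreal_leI)
  also have "\<dots> \<le> ennreal B"
  proof (rule SUP_least)
    fix m
    have "(\<integral>\<^sup>+ r. ?f m r \<partial>measure_pmf R) = ennreal (measure_pmf.expectation R (\<lambda>r. real (min r m)))"
      by (rule nn_integral_eq_integral) (auto intro!: integrable_measure_pmf_bounded[where B="real m"])
    then show "(\<integral>\<^sup>+ r. ?f m r \<partial>measure_pmf R) \<le> ennreal B"
      using assms by (simp add: expectation_min ennreal_leI)
  qed
  also have "\<dots> < \<infinity>"
    by simp
  finally show "(\<integral>\<^sup>+ r. ennreal (norm (real r)) \<partial>measure_pmf R) < \<infinity>" .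
qed simp

lemma integrable_of_tailf_decay:
  fixes lam :: real
  assumes "0 < lam" "1 \<le> K" "\<And>i. K < i \<Longrightarrow> tailf R i \<le> real i powr (- lam - 1)"
  shows "integrable (measure_pmf R) real"
proof (rule integrable_of_sum_tailf_bounded)
  fix m
  show "(\<Sum>i=1..m. tailf R i) \<le> real K + (1 + 1 / lam) * real K powr (- lam)"
    using sum_tailf_le[of R m K] sum_tailf_beyond_le[OF assms, of m] by linarith
qed

text \<open>\<open>meanR R\<close> is a Bochner integral, which is \<open>0\<close> unless \<open>R\<close> is integrable.\<close>

lemma sum_tailf_le_meanR:
  assumes "integrable (measure_pmf R) real"
  shows "(\<Sum>i=1..m. tailf R i) \<le> meanR R"
  unfolding meanR_def expectation_min[symmetric]
  by (rule Bochner_Integration.integral_mono[OF _ assms])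
     (auto intro: integrable_measure_pmf_bounded[where B="real m"])

section \<open>Asymptotics\<close>

lemma nat_ceiling_powr_le:
  fixes n :: nat and \<beta> :: real
  assumes "1 \<le> n" "0 \<le> \<beta>"
  shows "real (nat \<lceil>real n powr \<beta>\<rceil>) \<le> 2 * real n powr \<beta>"
proof -
  have "1 \<le> real n powr \<beta>"
    using assms by (intro ge_one_powr_ge_zero) auto
  then show ?thesis
    by linarith
qed

lemma eventually_le_nat_ceiling_powr:
  fixes \<beta> :: real
  assumes "0 < \<beta>"
  shows "eventually (\<lambda>n. K \<le> nat \<lceil>real n powr \<beta>\<rceil>) sequentially"
proof -
  have "filterlim (\<lambda>n. real n powr \<beta>) at_top sequentially"
    using assms by real_asymp
  then have "eventually (\<lambda>n. real K \<le> real n powr \<beta>) sequentially"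
    unfolding filterlim_at_top by simp
  then show ?thesis
  proof eventually_elim
    case (elim n)
    then have "real K \<le> real (nat \<lceil>real n powr \<beta>\<rceil>)"
      using real_nat_ceiling_ge[of "real n powr \<beta>"] by linarith
    then show ?case
      by simp
  qed
qed

lemma deviation_bound_tendsto_0:
  fixes \<alpha> lam c :: real
  assumes "0 < \<alpha>" "\<alpha> < 1" "0 < lam"
  defines "D \<equiv> \<lambda>n::nat. nat \<lceil>real n powr ((1 - \<alpha>) / 4)\<rceil>"
  shows "(\<lambda>n. (real (D n))\<^sup>2 * real n powr \<alpha> / real n
      + (exp (c * (ln (real n) * real (D n) powr (- lam))) - 1)) \<longlonglongrightarrow> 0"
proof -
  let ?\<beta> = "(1 - \<alpha>) / 4"
  have \<beta>: "0 < ?\<beta>"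
    using assms(2) by simp
  have "((\<lambda>n. (real (D n))\<^sup>2 * real n powr \<alpha> / real n) \<longlongrightarrow> 0) sequentially"
  proof (rule tendsto_sandwich[of "\<lambda>_. 0" _ _ "\<lambda>n. 4 * real n powr ((\<alpha> - 1) / 2)"])
    show "eventually (\<lambda>n. (real (D n))\<^sup>2 * real n powr \<alpha> / real n \<le> 4 * real n powr ((\<alpha> - 1) / 2)) sequentially"
    proof (rule eventually_sequentiallyI[of 1])
      fix n :: nat
      assume n: "1 \<le> n"
      have "real (D n) \<le> 2 * real n powr ?\<beta>"
        unfolding D_def by (rule nat_ceiling_powr_le[OF n]) (use \<beta> in simp)
      then have "(real (D n))\<^sup>2 \<le> (2 * real n powr ?\<beta>)\<^sup>2"
        by (intro power_mono) auto
      also have "\<dots> = 4 * real n powr (?\<beta> + ?\<beta>)"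
        by (simp only: power_mult_distrib power2_eq_square powr_add)
      also have "?\<beta> + ?\<beta> = (1 - \<alpha>) / 2"
        by simp
      finally have "(real (D n))\<^sup>2 * real n powr \<alpha> / real n \<le> 4 * real n powr ((1 - \<alpha>) / 2) * real n powr \<alpha> / real n"
        by (intro divide_right_mono mult_right_mono) auto
      also have "\<dots> = 4 * real n powr ((\<alpha> - 1) / 2)"
      proof -
        have "(1 - \<alpha>) / 2 + \<alpha> = (\<alpha> - 1) / 2 + 1"
          by (simp add: field_simps)
        then have "real n powr ((1 - \<alpha>) / 2) * real n powr \<alpha> = real n powr ((\<alpha> - 1) / 2) * real n powr 1"
          by (simp only: powr_add[symmetric])
        then show ?thesis
          using n by (simp add: mult.assoc)
      qed
      finally show "(real (D n))\<^sup>2 * real n powr \<alpha> / real n \<le> 4 * real n powr ((\<alpha> - 1) / 2)" .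
    qed
    show "((\<lambda>n. 4 * real n powr ((\<alpha> - 1) / 2)) \<longlongrightarrow> 0) sequentially"
      using assms(2) by real_asymp
  qed auto
  moreover have "((\<lambda>n. ln (real n) * real (D n) powr (- lam)) \<longlongrightarrow> 0) sequentially"
  proof (rule tendsto_sandwich[of "\<lambda>_. 0" _ _ "\<lambda>n. ln (real n) * real n powr (- (?\<beta> * lam))"])
    show "eventually (\<lambda>n. ln (real n) * real (D n) powr (- lam) \<le> ln (real n) * real n powr (- (?\<beta> * lam))) sequentially"
    proof (rule eventually_sequentiallyI[of 1])
      fix n :: nat
      assume n: "1 \<le> n"
      have "real n powr ?\<beta> \<le> real (D n)"
        unfolding D_def by (rule real_nat_ceiling_ge)
      then have "real (D n) powr (- lam) \<le> (real n powr ?\<beta>) powr (- lam)"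
        using assms(3) n by (intro powr_mono2') auto
      then show "ln (real n) * real (D n) powr (- lam) \<le> ln (real n) * real n powr (- (?\<beta> * lam))"
        using n by (intro mult_left_mono) (auto simp: powr_powr)
    qed
    show "((\<lambda>n. ln (real n) * real n powr (- (?\<beta> * lam))) \<longlongrightarrow> 0) sequentially"
      using \<beta> assms(3) by real_asymp
    show "eventually (\<lambda>n. 0 \<le> ln (real n) * real (D n) powr (- lam)) sequentially"
      by (rule eventually_sequentiallyI[of 1]) simp
  qed simp
  ultimately have "(\<lambda>n. (real (D n))\<^sup>2 * real n powr \<alpha> / real n
      + (exp (c * (ln (real n) * real (D n) powr (- lam))) - 1)) \<longlonglongrightarrow> 0 + (exp (c * 0) - 1)"
    by (intro tendsto_intros)
  then show ?thesis
    by simp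
qed

lemma prob_deviation_le:
  fixes R :: "nat pmf" and \<alpha> \<delta> lam :: real and n D :: nat
  assumes n: "2 \<le> n" and \<alpha>: "0 < \<alpha>" and \<delta>: "0 < \<delta>" and lam: "0 < lam" and D: "1 \<le> D"
    and decay: "\<And>i. D < i \<Longrightarrow> tailf R i \<le> real i powr (- lam - 1)"
    and mean: "0 < meanR R" "(\<Sum>i=1..n. tailf R i) \<le> meanR R"
  defines "b \<equiv> real n powr (1 - (\<Sum>i=1..n. tailf R i) / meanR R * \<alpha>)"
  shows "measure_pmf.prob (X_law R n (\<alpha> * real n * ln (real n) / meanR R))
      {X. \<delta> * b \<le> \<bar>real (card ({0..<n} - X)) - b\<bar>}
    \<le> ((real D)\<^sup>2 * real n powr \<alpha> / real n
      + (exp (\<alpha> * (1 + 1 / lam) / meanR R * (ln (real n) * real D powr (- lam))) - 1)) / \<delta>\<^sup>2"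
proof -
  define \<mu> where "\<mu> = meanR R"
  define t where "t = \<alpha> * real n * ln (real n) / \<mu>"
  have ln_n: "0 < ln (real n)"
    using n by simp
  have t: "0 < t"
    unfolding t_def \<mu>_def using n \<alpha> ln_n mean(1) by simp
  have tp: "t * arc_hit_prob R n = \<alpha> * ln (real n) * ((\<Sum>i=1..n. tailf R i) / \<mu>)"
    unfolding t_def arc_hit_prob_def using n by (simp add: field_simps)
  have "b = exp (ln (real n) * (1 - (\<Sum>i=1..n. tailf R i) / \<mu> * \<alpha>))"
    unfolding b_def \<mu>_def using n by (simp add: powr_def mult.commute)
  also have "\<dots> = real n * exp (- t * arc_hit_prob R n)"
    using n by (simp add: tp algebra_simps exp_diff exp_minus divide_inverse)
  finally have b_eq: "b = real n * exp (- t * arc_hit_prob R n)" .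
  have "exp (t * arc_hit_prob R n) \<le> exp (\<alpha> * ln (real n) * 1)"
    unfolding tp using mean \<alpha> ln_n by (intro exp_mono mult_left_mono) (simp_all add: \<mu>_def)
  also have "\<dots> = real n powr \<alpha>"
    using n by (simp add: powr_def mult.commute)
  finally have exp_tp: "exp (t * arc_hit_prob R n) \<le> real n powr \<alpha>" .
  have "t * tailf_sum_beyond R D n / real n = \<alpha> * ln (real n) / \<mu> * tailf_sum_beyond R D n"
    unfolding t_def using n by (simp add: field_simps)
  also have "\<dots> \<le> \<alpha> * ln (real n) / \<mu> * ((1 + 1 / lam) * real D powr (- lam))"
    using sum_tailf_beyond_le[OF lam D decay] \<alpha> ln_n mean(1)
    by (intro mult_left_mono) (simp_all add: \<mu>_def)
  finally have tH: "t * tailf_sum_beyond R D n / real n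
      \<le> \<alpha> * (1 + 1 / lam) / meanR R * (ln (real n) * real D powr (- lam))"
    by (simp add: \<mu>_def field_simps)
  have "measure_pmf.prob (X_law R n t) {X. \<delta> * b \<le> \<bar>real (card ({0..<n} - X)) - b\<bar>}
      \<le> ((real D)\<^sup>2 * exp (t * arc_hit_prob R n) / real n
        + (exp (t * tailf_sum_beyond R D n / real n) - 1)) / \<delta>\<^sup>2"
    unfolding b_eq using prob_card_uncovered_deviation_le[OF t] n \<delta> by simp
  also have "\<dots> \<le> ((real D)\<^sup>2 * real n powr \<alpha> / real n
      + (exp (\<alpha> * (1 + 1 / lam) / meanR R * (ln (real n) * real D powr (- lam))) - 1)) / \<delta>\<^sup>2"
    using exp_tp tH by (intro divide_right_mono add_mono mult_left_mono diff_right_mono) auto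
  finally show ?thesis
    unfolding t_def \<mu>_def .
qed

lemma X_law_deviation_tendsto_0:
  fixes R :: "nat pmf" and \<alpha> \<delta> lam :: real and K :: nat
  assumes alpha: "0 < \<alpha>" "\<alpha> < 1" and delta: "0 < \<delta>" and lam: "0 < lam" and K: "1 \<le> K"
    and decay: "\<And>i. K < i \<Longrightarrow> tailf R i \<le> real i powr (- lam - 1)"
    and mean: "0 < meanR R" "\<And>m. (\<Sum>i=1..m. tailf R i) \<le> meanR R"
  shows "((\<lambda>n::nat.
      let \<mu> = meanR R;
          g = (\<Sum>i=1..n. tailf R i) / \<mu>;
          t = \<alpha> * real n * ln (real n) / \<mu>;
          b = real n powr (1 - g * \<alpha>)
      in measure_pmf.prob (X_law R n t)
           {X. \<bar>real (card ({0..<n} - X)) - b\<bar> \<ge> \<delta> * b})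
     \<longlongrightarrow> 0) sequentially"
    (is "(?P \<longlongrightarrow> 0) sequentially")
proof -
  define D where "D n = nat \<lceil>real n powr ((1 - \<alpha>) / 4)\<rceil>" for n
  define U where "U n = ((real (D n))\<^sup>2 * real n powr \<alpha> / real n
      + (exp (\<alpha> * (1 + 1 / lam) / meanR R * (ln (real n) * real (D n) powr (- lam))) - 1)) / \<delta>\<^sup>2" for n
  have "eventually (\<lambda>n. 2 \<le> n \<and> K \<le> D n) sequentially"
    unfolding D_def using alpha by (intro eventually_conj eventually_ge_at_top eventually_le_nat_ceiling_powr) simp
  then have bound: "eventually (\<lambda>n. ?P n \<le> U n) sequentially"
  proof eventually_elim
    case (elim n)
    then have "\<And>i. D n < i \<Longrightarrow> tailf R i \<le> real i powr (- lam - 1)"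
      using decay by simp
    with elim K show ?case
      unfolding U_def Let_def by (intro prob_deviation_le alpha(1) delta lam mean) auto
  qed
  have U_lim: "U \<longlonglongrightarrow> 0"
    unfolding U_def D_def by (rule tendsto_divide_zero[OF deviation_bound_tendsto_0[OF alpha lam]])
  show ?thesis
    by (rule tendsto_sandwich[OF _ bound tendsto_const U_lim]) (simp add: Let_def)
qed

theorem mainTheorem7:
  fixes R :: "nat pmf" and \<alpha> \<delta> :: real
  assumes pos: "0 \<notin> set_pmf R"
    and decay: "\<exists>lam>0. ((\<lambda>k. tailf R k * real k powr (1 + lam)) \<longlongrightarrow> 0) sequentially"
    and alpha: "0 < \<alpha>" "\<alpha> < 1"
    and delta: "0 < \<delta>"
  shows "((\<lambda>n::nat.
      let \<mu> = meanR R;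
          g = (\<Sum>i=1..n. tailf R i) / \<mu>;
          t = \<alpha> * real n * ln (real n) / \<mu>;
          b = real n powr (1 - g * \<alpha>)
      in measure_pmf.prob (X_law R n t)
           {X. \<bar>real (card ({0..<n} - X)) - b\<bar> \<ge> \<delta> * b})
     \<longlongrightarrow> 0) sequentially"
proof -
  obtain lam where lam: "0 < lam" and lim: "((\<lambda>k. tailf R k * real k powr (1 + lam)) \<longlongrightarrow> 0) sequentially"
    using decay by blast
  obtain K where K: "1 \<le> K" and decay_K: "\<And>i. K < i \<Longrightarrow> tailf R i \<le> real i powr (- lam - 1)"
    using tailf_le_powr_eventually[OF lim] by blast
  have sum_le_mean: "(\<Sum>i=1..m. tailf R i) \<le> meanR R" for m
    by (rule sum_tailf_le_meanR[OF integrable_of_tailf_decay[OF lam K decay_K]])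
  have mean_pos: "0 < meanR R"
    using sum_le_mean[of 1] tailf_one[OF pos] by simp
  show ?thesis
    using X_law_deviation_tendsto_0[OF alpha delta lam K decay_K mean_pos sum_le_mean] .
qed

end
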